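(* The rank function of a U-matroid $U=(E,\mathcal{D},\rho)$ is determined by the set $\mathcal{B}(U)$ and the lattice $\mathcal{D}$ by the formula $\rho(A) = \max\{|A\cap B|: B\in\mathcal{B}(U)\}$ for $A\in\mathcal{D}$.
   Context: A U-matroid is a triple $U=(E,\mathcal{D},\rho)$ where $E$ is finite, $\mathcal{D}\subseteq2^E$ is an accessible distributive lattice of sets (closed under union and intersection, containing $\emptyset$ and $E$, every nonempty member $A$ has some $x\in A$ with $A-x\in\mathcal{D}$), and $\rho:\mathcal{D}\to\mathbb{N}$ satisfies $\rho(\emptyset)=0$, monotonicity, submodularity, and unit increase ($\rho(A\cup e)-\rho(A)\le 1$ when both sets lie in $\mathcal{D}$). Its base polyhedron is $\{\mathbf{x}\in\mathbb{R}^E:\mathbf{x}(A)\le\rho(A)\ \forall A\in\mathcal{D},\ \mathbf{x}(E)=\rho(E)\}$. A basis of $U$ is the support of a vertex of its base polyhedron; $\mathcal{B}(U)$ is the set of bases. Equivalently, each basis arises from a maximal chain $\emptyset=A_0\lessdot\cdots\lessdot A_n=E$ in $\mathcal{D}$ as the set of elements $A_i\setminus A_{i-1}$ with $\rho(A_i)=\rho(A_{i-1})+1$. *)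

theory Defs
  imports Complex_Main
begin

definition accessible_distributive_lattice :: "'a set \<Rightarrow> 'a set set \<Rightarrow> bool" where
  "accessible_distributive_lattice E D \<longleftrightarrow>
     finite E \<and> D \<subseteq> Pow E \<and> {} \<in> D \<and> E \<in> D \<and>
     (\<forall>A\<in>D. \<forall>B\<in>D. A \<union> B \<in> D \<and> A \<inter> B \<in> D) \<and>
     (\<forall>A\<in>D. A \<noteq> {} \<longrightarrow> (\<exists>x\<in>A. A - {x} \<in> D))"

definition U_matroid :: "'a set \<Rightarrow> 'a set set \<Rightarrow> ('a set \<Rightarrow> nat) \<Rightarrow> bool" where
  "U_matroid E D \<rho> \<longleftrightarrow>
     accessible_distributive_lattice E D \<and>
     \<rho> {} = 0 \<and>
     (\<forall>A\<in>D. \<forall>B\<in>D. A \<subseteq> B \<longrightarrow> \<rho> A \<le> \<rho> B) \<and>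
     (\<forall>A\<in>D. \<forall>B\<in>D. \<rho> (A \<union> B) + \<rho> (A \<inter> B) \<le> \<rho> A + \<rho> B) \<and>
     (\<forall>A\<in>D. \<forall>e. A \<union> {e} \<in> D \<longrightarrow> \<rho> (A \<union> {e}) \<le> \<rho> A + 1)"

text \<open>Base polyhedron in R^E; vectors are functions 'a => real vanishing outside E.\<close>
definition base_polyhedron :: "'a set \<Rightarrow> 'a set set \<Rightarrow> ('a set \<Rightarrow> nat) \<Rightarrow> ('a \<Rightarrow> real) set" where
  "base_polyhedron E D \<rho> =
     {x. (\<forall>e. e \<notin> E \<longrightarrow> x e = 0) \<and>
         (\<forall>A\<in>D. (\<Sum>e\<in>A. x e) \<le> real (\<rho> A)) \<and>
         (\<Sum>e\<in>E. x e) = real (\<rho> E)}"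

definition is_vertex :: "('a \<Rightarrow> real) \<Rightarrow> ('a \<Rightarrow> real) set \<Rightarrow> bool" where
  "is_vertex x P \<longleftrightarrow> x \<in> P \<and>
     \<not> (\<exists>y\<in>P. \<exists>z\<in>P. y \<noteq> z \<and> (\<exists>t::real. 0 < t \<and> t < 1 \<and> x = (\<lambda>e. t * y e + (1 - t) * z e)))"

definition support :: "'a set \<Rightarrow> ('a \<Rightarrow> real) \<Rightarrow> 'a set" where
  "support E x = {e\<in>E. x e \<noteq> 0}"

definition bases :: "'a set \<Rightarrow> 'a set set \<Rightarrow> ('a set \<Rightarrow> nat) \<Rightarrow> 'a set set" where
  "bases E D \<rho> = {support E x | x. is_vertex x (base_polyhedron E D \<rho>)}"

end

theory Submission
  imports Defs
begin

text \<open>Every vertex x of the base polyhedron is 0/1-valued. By submodularity the tight sets of x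
  form a lattice; for e \<in> E let M be the least tight set containing e and N the largest tight
  subset of M avoiding e. If M contained some f \<noteq> e outside N, no tight set would separate e
  from f, and x could be moved in both directions along the difference of the unit vectors of e
  and f without leaving the polyhedron. Hence M = N + e, and x e = \<rho> M - \<rho> N is 0 or 1 by
  unit increase. So |A \<inter> B| = x(A) \<le> \<rho> A for every basis B = supp x. Conversely, a maximal
  chain of D through A yields the greedy vector, which is a vertex tight on every member of the
  chain, so its support B satisfies |A \<inter> B| = \<rho> A.\<close>

locale accessible_lattice =
  fixes E :: "'a set" and D :: "'a set set"
  assumes finite_ground: "finite E"
    and lattice_subset_Pow: "D \<subseteq> Pow E"
    and empty_in_lattice: "{} \<in> D"
    and ground_in_lattice: "E \<in> D"
    and Un_in_lattice: "S \<in> D \<Longrightarrow> T \<in> D \<Longrightarrow> S \<union> T \<in> D"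
    and Int_in_lattice: "S \<in> D \<Longrightarrow> T \<in> D \<Longrightarrow> S \<inter> T \<in> D"
    and accessible: "S \<in> D \<Longrightarrow> S \<noteq> {} \<Longrightarrow> \<exists>x\<in>S. S - {x} \<in> D"

lemma accessible_latticeI:
  "accessible_distributive_lattice E D \<Longrightarrow> accessible_lattice E D"
  unfolding accessible_distributive_lattice_def by unfold_locales auto

text \<open>Such enumerations correspond to the maximal chains
  \<open>\<emptyset> = A\<^sub>0 \<subset> \<dots> \<subset> A\<^sub>n = E\<close> of D, with \<open>A\<^sub>k\<close> the set of the first k elements.\<close>

definition chain_enumeration :: "'a set \<Rightarrow> 'a set set \<Rightarrow> 'a list \<Rightarrow> bool" where
  "chain_enumeration E D es \<longleftrightarrow>
     distinct es \<and> set es = E \<and> (\<forall>k\<le>length es. set (take k es) \<in> D)"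

context accessible_lattice
begin

lemma lattice_subset_ground: "S \<in> D \<Longrightarrow> S \<subseteq> E"
  using lattice_subset_Pow by blast

lemma finite_lattice_member: "S \<in> D \<Longrightarrow> finite S"
  using lattice_subset_ground finite_ground by (rule finite_subset)

lemma finite_lattice: "finite D"
  using lattice_subset_Pow finite_ground by (meson finite_Pow_iff finite_subset)

lemma exists_removable_outside:
  assumes "A \<in> D" "S \<in> D" "A \<subset> S"
  shows "\<exists>x\<in>S - A. S - {x} \<in> D"
  using assms
proof (induction "card S" arbitrary: S A rule: less_induct)
  case less
  obtain y where y: "y \<in> S" "S - {y} \<in> D"
    using accessible less.prems by blast
  show ?case
  proof (cases "y \<in> A")
    case False
    with y show ?thesis by blast
  next
    case True
    have "A - {y} = A \<inter> (S - {y})"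
      using less.prems by blast
    then have "A - {y} \<in> D"
      using Int_in_lattice less.prems(1) y(2) by simp
    moreover have "card (S - {y}) < card S"
      using finite_lattice_member[OF less.prems(2)] y(1) by (rule card_Diff1_less)
    moreover have "A - {y} \<subset> S - {y}"
      using True less.prems(3) by blast
    ultimately obtain x where x: "x \<in> S - {y} - (A - {y})" "S - {y} - {x} \<in> D"
      using less.hyps[OF _ _ y(2)] by blast
    have "S - {y} - {x} \<union> A = S - {x}"
      using x True less.prems(3) by blast
    then have "S - {x} \<in> D"
      using Un_in_lattice[OF x(2) less.prems(1)] by simp
    with x show ?thesis by blast
  qed
qed

lemma exists_chain_between:
  assumes "A \<in> D" "S \<in> D" "A \<subseteq> S"
  shows "\<exists>ys. distinct ys \<and> set ys = S - A \<and> (\<forall>k\<le>length ys. A \<union> set (take k ys) \<in> D)"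
  using assms
proof (induction "card (S - A)" arbitrary: S rule: less_induct)
  case less
  show ?case
  proof (cases "A = S")
    case True
    with less.prems show ?thesis
      by (intro exI[of _ "[]"]) simp
  next
    case False
    then obtain x where x: "x \<in> S - A" "S - {x} \<in> D"
      using exists_removable_outside less.prems by blast
    have "card (S - A - {x}) < card (S - A)"
      using x(1) finite_lattice_member[OF less.prems(2)] by (intro card_Diff1_less) auto
    then have "card (S - {x} - A) < card (S - A)"
      by (metis Diff_insert Diff_insert2)
    moreover have "A \<subseteq> S - {x}"
      using x(1) less.prems(3) by blast
    ultimately obtain ys where ys: "distinct ys" "set ys = S - {x} - A"
      "\<forall>k\<le>length ys. A \<union> set (take k ys) \<in> D"
      using less.hyps[OF _ less.prems(1) x(2)] by blast
    have "A \<union> set (take k (ys @ [x])) \<in> D" if "k \<le> length (ys @ [x])" for k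
    proof (cases "k \<le> length ys")
      case True
      with ys(3) show ?thesis by simp
    next
      case False
      with that have "A \<union> set (take k (ys @ [x])) = S"
        using ys(2) x(1) less.prems(3) by auto
      with less.prems(2) show ?thesis by simp
    qed
    moreover have "distinct (ys @ [x])" "set (ys @ [x]) = S - A"
      using ys x by auto
    ultimately show ?thesis by blast
  qed
qed

lemma exists_chain_enumeration_through:
  assumes "A \<in> D"
  shows "\<exists>es. chain_enumeration E D es \<and> set (take (card A) es) = A"
proof -
  obtain ys where ys: "distinct ys" "set ys = A" "\<forall>k\<le>length ys. set (take k ys) \<in> D"
    using exists_chain_between[OF empty_in_lattice assms] by auto
  obtain zs where zs: "distinct zs" "set zs = E - A" "\<forall>k\<le>length zs. A \<union> set (take k zs) \<in> D"
    using exists_chain_between[OF assms ground_in_lattice lattice_subset_ground[OF assms]] by blast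
  have length_ys: "length ys = card A"
    using ys distinct_card by fastforce
  have "set (take k (ys @ zs)) \<in> D" if "k \<le> length (ys @ zs)" for k
  proof (cases "k \<le> length ys")
    case True
    with ys(3) show ?thesis by simp
  next
    case False
    then have "set (take k (ys @ zs)) = A \<union> set (take (k - length ys) zs)"
      using ys(2) by simp
    with zs(3) that show ?thesis by simp
  qed
  moreover have "distinct (ys @ zs)" "set (ys @ zs) = E"
    using ys zs lattice_subset_ground[OF assms] by auto
  ultimately show ?thesis
    unfolding chain_enumeration_def using length_ys ys(2)
    by (intro exI[of _ "ys @ zs"]) simp
qed

end

lemma Inter_in_if_Int_closed:
  assumes "finite F" "F \<noteq> {}" "F \<subseteq> C" "\<And>S T. S \<in> C \<Longrightarrow> T \<in> C \<Longrightarrow> S \<inter> T \<in> C"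
  shows "\<Inter>F \<in> C"
  using assms(1-3) by (induction F rule: finite_ne_induct) (auto intro: assms(4))

lemma Union_in_if_Un_closed:
  assumes "finite F" "F \<subseteq> C" "{} \<in> C" "\<And>S T. S \<in> C \<Longrightarrow> T \<in> C \<Longrightarrow> S \<union> T \<in> C"
  shows "\<Union>F \<in> C"
  using assms(1,2) by (induction F rule: finite_induct) (auto intro: assms(3,4))

lemma exists_cover_of_separated_point:
  assumes "finite T" "{} \<in> T" "E \<in> T" "e \<in> E"
    and Un_closed: "\<And>S S'. S \<in> T \<Longrightarrow> S' \<in> T \<Longrightarrow> S \<union> S' \<in> T"
    and Int_closed: "\<And>S S'. S \<in> T \<Longrightarrow> S' \<in> T \<Longrightarrow> S \<inter> S' \<in> T"
    and separated: "\<And>f. f \<in> E \<Longrightarrow> f \<noteq> e \<Longrightarrow> \<exists>S\<in>T. \<not> (e \<in> S \<longleftrightarrow> f \<in> S)"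
  shows "\<exists>N\<in>T. e \<notin> N \<and> insert e N \<in> T"
proof -
  define M where "M = \<Inter>{S \<in> T. e \<in> S}"
  define N where "N = \<Union>{S \<in> T. S \<subseteq> M \<and> e \<notin> S}"
  have "M \<in> T"
    unfolding M_def using assms(1,3,4) by (intro Inter_in_if_Int_closed Int_closed) auto
  have "N \<in> T"
    unfolding N_def using assms(1,2) by (intro Union_in_if_Un_closed Un_closed) auto
  have "e \<in> M" "N \<subseteq> M" "e \<notin> N"
    unfolding M_def N_def by auto
  have "M = insert e N"
  proof (rule ccontr)
    assume "M \<noteq> insert e N"
    with \<open>e \<in> M\<close> \<open>N \<subseteq> M\<close> obtain f where f: "f \<in> M" "f \<noteq> e" "f \<notin> N"
      by blast
    moreover have "f \<in> E"
      using f(1) assms(3,4) unfolding M_def by blast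
    ultimately obtain S where S: "S \<in> T" "\<not> (e \<in> S \<longleftrightarrow> f \<in> S)"
      using separated by blast
    show False
    proof (cases "e \<in> S")
      case True
      with S f(1) show False
        unfolding M_def by blast
    next
      case False
      have "S \<inter> M \<in> {S \<in> T. S \<subseteq> M \<and> e \<notin> S}"
        using Int_closed[OF S(1) \<open>M \<in> T\<close>] False by blast
      then have "S \<inter> M \<subseteq> N"
        unfolding N_def by (rule Union_upper)
      with S(2) False f show False
        by blast
    qed
  qed
  with \<open>N \<in> T\<close> \<open>M \<in> T\<close> \<open>e \<notin> N\<close> show ?thesis
    by blast
qed

lemma finite_positive_lower_bound:
  fixes g :: "'b \<Rightarrow> real"
  assumes "finite F" "\<And>S. S \<in> F \<Longrightarrow> 0 < g S"
  shows "\<exists>\<epsilon>>0. \<forall>S\<in>F. \<epsilon> \<le> g S"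
  using assms by (intro exI[of _ "Min (insert 1 (g ` F))"]) auto

lemma convex_combination_attains_bound:
  fixes a b c t :: real
  assumes "0 < t" "t < 1" "a \<le> c" "b \<le> c" "t * a + (1 - t) * b = c"
  shows "a = c \<and> b = c"
proof -
  have "t * a \<le> t * c" "(1 - t) * b \<le> (1 - t) * c"
    using assms by (simp_all add: mult_left_mono)
  moreover have "t * c + (1 - t) * c = c"
    by (simp add: algebra_simps)
  ultimately have "t * a = t * c" "(1 - t) * b = (1 - t) * c"
    using assms(5) by linarith+
  with assms(1,2) show ?thesis by simp
qed

lemma card_Int_support_eq_sum:
  assumes "finite A" "A \<subseteq> E" "\<And>e. e \<in> A \<Longrightarrow> x e = 0 \<or> x e = 1"
  shows "real (card (A \<inter> support E x)) = sum x A"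
proof -
  have "sum x A = (\<Sum>e\<in>A. if x e \<noteq> 0 then 1 else 0)"
    using assms(3) by (intro sum.cong) auto
  also have "\<dots> = card {e\<in>A. x e \<noteq> 0}"
    using assms(1) by (simp add: sum.If_cases Int_def)
  also have "{e\<in>A. x e \<noteq> 0} = A \<inter> support E x"
    using assms(2) unfolding support_def by blast
  finally show ?thesis by simp
qed

definition tight_sets :: "'a set set \<Rightarrow> ('a set \<Rightarrow> nat) \<Rightarrow> ('a \<Rightarrow> real) \<Rightarrow> 'a set set" where
  "tight_sets D \<rho> x = {S \<in> D. sum x S = real (\<rho> S)}"

lemma not_vertex_if_symmetric_shifts:
  assumes "(\<lambda>u. x u + d u) \<in> P" "(\<lambda>u. x u - d u) \<in> P" "d \<noteq> (\<lambda>u. 0)"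
  shows "\<not> is_vertex x P"
proof
  have "(\<lambda>u. x u + d u) \<noteq> (\<lambda>u. x u - d u)"
  proof
    assume "(\<lambda>u. x u + d u) = (\<lambda>u. x u - d u)"
    then have "d u = 0" for u
      by (metis add_left_cancel diff_conv_add_uminus equal_neg_zero)
    with assms(3) show False
      by auto
  qed
  moreover have "x = (\<lambda>u. 1/2 * (x u + d u) + (1 - 1/2) * (x u - d u))"
    by (rule ext) (simp add: field_simps)
  moreover have "(0::real) < 1/2" "(1/2::real) < 1"
    by simp_all
  moreover assume "is_vertex x P"
  ultimately show False
    using assms(1,2) unfolding is_vertex_def by blast
qed

lemma base_polyhedron_uniform_slack:
  assumes "finite E" "D \<subseteq> Pow E" "x \<in> base_polyhedron E D \<rho>"
  shows "\<exists>\<epsilon>>0. \<forall>S\<in>D - tight_sets D \<rho> x. sum x S + \<epsilon> \<le> real (\<rho> S)"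
proof -
  have "finite (D - tight_sets D \<rho> x)"
    using assms(1,2) by (meson finite_Diff finite_Pow_iff finite_subset)
  moreover have "0 < real (\<rho> S) - sum x S" if "S \<in> D - tight_sets D \<rho> x" for S
    using assms(3) that unfolding base_polyhedron_def tight_sets_def by fastforce
  ultimately obtain \<epsilon> where "\<epsilon> > 0" and bound: "\<forall>S\<in>D - tight_sets D \<rho> x. \<epsilon> \<le> real (\<rho> S) - sum x S"
    using finite_positive_lower_bound[of "D - tight_sets D \<rho> x" "\<lambda>S. real (\<rho> S) - sum x S"] by blast
  show ?thesis
  proof (intro exI[of _ \<epsilon>] conjI ballI)
    fix S
    assume "S \<in> D - tight_sets D \<rho> x"
    with bound have "\<epsilon> \<le> real (\<rho> S) - sum x S"
      by blast
    then show "sum x S + \<epsilon> \<le> real (\<rho> S)"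
      by linarith
  qed fact
qed

lemma not_vertex_if_tight_sets_inseparable:
  assumes "finite E" "D \<subseteq> Pow E" and x: "x \<in> base_polyhedron E D \<rho>"
    and "e \<in> E" "f \<in> E" "e \<noteq> f"
    and inseparable: "\<And>S. S \<in> tight_sets D \<rho> x \<Longrightarrow> e \<in> S \<longleftrightarrow> f \<in> S"
  shows "\<not> is_vertex x (base_polyhedron E D \<rho>)"
proof -
  let ?P = "base_polyhedron E D \<rho>"
  define d :: "'a \<Rightarrow> real" where "d u = of_bool (u = e) - of_bool (u = f)" for u
  have sum_d: "sum d S = of_bool (e \<in> S) - of_bool (f \<in> S)" if "finite S" for S
    using that unfolding d_def by (simp add: sum_subtractf)
  have finite_members: "finite S" if "S \<in> D" for S
    using assms(1,2) that by (meson PowD finite_subset subsetD)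
  obtain \<epsilon> where "\<epsilon> > 0" and slack: "\<And>S. S \<in> D - tight_sets D \<rho> x \<Longrightarrow> sum x S + \<epsilon> \<le> real (\<rho> S)"
    using base_polyhedron_uniform_slack[OF assms(1-3)] by blast
  have shifted: "(\<lambda>u. x u + c * d u) \<in> ?P" if "\<bar>c\<bar> \<le> \<epsilon>" for c
  proof -
    have sum_shifted: "(\<Sum>u\<in>S. x u + c * d u) = sum x S + c * sum d S" for S
      by (simp add: sum.distrib sum_distrib_left)
    have "(\<Sum>u\<in>S. x u + c * d u) \<le> real (\<rho> S)" if "S \<in> D" for S
    proof (cases "S \<in> tight_sets D \<rho> x")
      case True
      then show ?thesis
        using inseparable sum_d finite_members that sum_shifted unfolding tight_sets_def by auto
    next
      case False
      have "c * sum d S \<le> \<bar>c\<bar>"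
        using sum_d finite_members that by (auto simp: abs_if)
      with slack[of S] False that \<open>\<bar>c\<bar> \<le> \<epsilon>\<close> sum_shifted show ?thesis
        by fastforce
    qed
    moreover have "sum d E = 0"
      using sum_d assms(1,4,5) by simp
    ultimately show ?thesis
      using x assms(4,5) sum_shifted unfolding base_polyhedron_def d_def by auto
  qed
  show ?thesis
  proof (rule not_vertex_if_symmetric_shifts)
    show "(\<lambda>u. x u + \<epsilon> * d u) \<in> ?P" "(\<lambda>u. x u - \<epsilon> * d u) \<in> ?P"
      using shifted[of \<epsilon>] shifted[of "- \<epsilon>"] \<open>\<epsilon> > 0\<close> by simp_all
    show "(\<lambda>u. \<epsilon> * d u) \<noteq> (\<lambda>u. 0)"
      using \<open>\<epsilon> > 0\<close> \<open>e \<noteq> f\<close> by (auto dest!: fun_cong[where x = e] simp: d_def)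
  qed
qed

definition greedy_vector :: "('a set \<Rightarrow> nat) \<Rightarrow> 'a list \<Rightarrow> 'a \<Rightarrow> real" where
  "greedy_vector \<rho> es e =
     (if e \<in> set es
      then real (\<rho> (insert e (set (takeWhile (\<lambda>u. u \<noteq> e) es))))
             - real (\<rho> (set (takeWhile (\<lambda>u. u \<noteq> e) es)))
      else 0)"

lemma takeWhile_neq_nth:
  "distinct xs \<Longrightarrow> k < length xs \<Longrightarrow> takeWhile (\<lambda>u. u \<noteq> xs ! k) xs = take k xs"
  by (rule takeWhile_eq_take_P_nth) (simp_all add: nth_eq_iff_index_eq)

lemma set_take_Suc_nth:
  "k < length xs \<Longrightarrow> set (take (Suc k) xs) = insert (xs ! k) (set (take k xs))"
  by (simp add: take_Suc_conv_app_nth)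

lemma nth_notin_set_take:
  assumes "distinct xs" "k < length xs"
  shows "xs ! k \<notin> set (take k xs)"
proof -
  have "distinct (take (Suc k) xs)"
    using assms(1) by simp
  with assms(2) show ?thesis
    by (simp add: take_Suc_conv_app_nth)
qed

lemma greedy_vector_nth:
  "distinct es \<Longrightarrow> k < length es \<Longrightarrow>
   greedy_vector \<rho> es (es ! k) = real (\<rho> (set (take (Suc k) es))) - real (\<rho> (set (take k es)))"
  unfolding greedy_vector_def by (simp add: takeWhile_neq_nth set_take_Suc_nth)

lemma sum_prefix_Suc:
  "distinct es \<Longrightarrow> k < length es \<Longrightarrow>
   sum y (set (take (Suc k) es)) = y (es ! k) + sum y (set (take k es))"
  by (simp add: set_take_Suc_nth nth_notin_set_take)

lemma sum_greedy_vector_prefix: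
  assumes "distinct es" "\<rho> {} = 0" "k \<le> length es"
  shows "sum (greedy_vector \<rho> es) (set (take k es)) = real (\<rho> (set (take k es)))"
  using assms(3)
proof (induction k)
  case 0
  with assms(2) show ?case by simp
next
  case (Suc k)
  with assms(1) show ?case
    by (simp add: sum_prefix_Suc greedy_vector_nth)
qed

lemma eq_greedy_vector_if_tight_on_prefixes:
  assumes "distinct es" "\<And>e. e \<notin> set es \<Longrightarrow> y e = 0"
    and tight: "\<And>k. k \<le> length es \<Longrightarrow> sum y (set (take k es)) = real (\<rho> (set (take k es)))"
  shows "y = greedy_vector \<rho> es"
proof
  fix e
  show "y e = greedy_vector \<rho> es e"
  proof (cases "e \<in> set es")
    case True
    then obtain k where k: "k < length es" "e = es ! k"
      by (metis in_set_conv_nth)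
    with assms(1) tight[of k] tight[of "Suc k"] show ?thesis
      by (simp add: sum_prefix_Suc greedy_vector_nth)
  next
    case False
    with assms(2) show ?thesis
      unfolding greedy_vector_def by simp
  qed
qed

locale u_matroid = accessible_lattice E D for E :: "'a set" and D +
  fixes \<rho> :: "'a set \<Rightarrow> nat"
  assumes rank_empty: "\<rho> {} = 0"
    and rank_mono: "S \<in> D \<Longrightarrow> T \<in> D \<Longrightarrow> S \<subseteq> T \<Longrightarrow> \<rho> S \<le> \<rho> T"
    and rank_submodular: "S \<in> D \<Longrightarrow> T \<in> D \<Longrightarrow> \<rho> (S \<union> T) + \<rho> (S \<inter> T) \<le> \<rho> S + \<rho> T"
    and rank_unit_increase: "S \<in> D \<Longrightarrow> insert e S \<in> D \<Longrightarrow> \<rho> (insert e S) \<le> \<rho> S + 1"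

lemma u_matroidI: "U_matroid E D \<rho> \<Longrightarrow> u_matroid E D \<rho>"
  unfolding U_matroid_def u_matroid_def u_matroid_axioms_def
  by (auto intro: accessible_latticeI)

context u_matroid
begin

abbreviation polyhedron :: "('a \<Rightarrow> real) set" where
  "polyhedron \<equiv> base_polyhedron E D \<rho>"

lemma sum_le_rank: "x \<in> polyhedron \<Longrightarrow> S \<in> D \<Longrightarrow> sum x S \<le> real (\<rho> S)"
  unfolding base_polyhedron_def by blast

lemma tight_sets_Un_Int:
  assumes x: "x \<in> polyhedron" and "S \<in> tight_sets D \<rho> x" "T \<in> tight_sets D \<rho> x"
  shows "S \<union> T \<in> tight_sets D \<rho> x \<and> S \<inter> T \<in> tight_sets D \<rho> x"
proof -
  have D: "S \<in> D" "T \<in> D"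
    using assms(2,3) unfolding tight_sets_def by auto
  have "sum x (S \<union> T) + sum x (S \<inter> T) = sum x S + sum x T"
    using sum.union_inter finite_lattice_member D by blast
  moreover have "real (\<rho> (S \<union> T)) + real (\<rho> (S \<inter> T)) \<le> real (\<rho> S) + real (\<rho> T)"
    using rank_submodular[OF D] by linarith
  moreover have "sum x (S \<union> T) \<le> real (\<rho> (S \<union> T))" "sum x (S \<inter> T) \<le> real (\<rho> (S \<inter> T))"
    using sum_le_rank[OF x] Un_in_lattice Int_in_lattice D by blast+
  ultimately show ?thesis
    using assms(2,3) Un_in_lattice[OF D] Int_in_lattice[OF D] unfolding tight_sets_def by auto
qed

lemma vertex_value_01:
  assumes vertex: "is_vertex x polyhedron" and e: "e \<in> E"
  shows "x e = 0 \<or> x e = 1"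
proof -
  let ?T = "tight_sets D \<rho> x"
  have x: "x \<in> polyhedron"
    using vertex unfolding is_vertex_def by blast
  have "\<exists>N\<in>?T. e \<notin> N \<and> insert e N \<in> ?T"
  proof (rule exists_cover_of_separated_point[OF _ _ _ e])
    show "finite ?T"
      using finite_lattice unfolding tight_sets_def by simp
    show "{} \<in> ?T" "E \<in> ?T"
      using x ground_in_lattice empty_in_lattice rank_empty
      unfolding tight_sets_def base_polyhedron_def by auto
    show "S \<union> S' \<in> ?T" "S \<inter> S' \<in> ?T" if "S \<in> ?T" "S' \<in> ?T" for S S'
      using tight_sets_Un_Int[OF x that] by auto
    show "\<exists>S\<in>?T. \<not> (e \<in> S \<longleftrightarrow> f \<in> S)" if "f \<in> E" "f \<noteq> e" for f
      using not_vertex_if_tight_sets_inseparable[OF finite_ground lattice_subset_Pow x e that(1)]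
        that(2) vertex by blast
  qed
  then obtain N where N: "N \<in> ?T" "e \<notin> N" "insert e N \<in> ?T"
    by blast
  then have ND: "N \<in> D" "insert e N \<in> D"
    unfolding tight_sets_def by auto
  have "sum x (insert e N) = x e + sum x N"
    using N(2) finite_lattice_member[OF ND(1)] by simp
  with N have "x e = real (\<rho> (insert e N)) - real (\<rho> N)"
    unfolding tight_sets_def by auto
  moreover have "\<rho> N \<le> \<rho> (insert e N)" "\<rho> (insert e N) \<le> \<rho> N + 1"
    using rank_mono[OF ND] rank_unit_increase[OF ND] by auto
  then have "\<rho> (insert e N) = \<rho> N \<or> \<rho> (insert e N) = \<rho> N + 1"
    by linarith
  ultimately show ?thesis
    by auto
qed

lemma card_Int_vertex_support:
  assumes "is_vertex x polyhedron" "A \<in> D"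
  shows "real (card (A \<inter> support E x)) = sum x A"
  using finite_lattice_member[OF assms(2)] lattice_subset_ground[OF assms(2)]
proof (rule card_Int_support_eq_sum)
  show "x e = 0 \<or> x e = 1" if "e \<in> A" for e
    using vertex_value_01[OF assms(1)] lattice_subset_ground[OF assms(2)] that by blast
qed

lemma rank_diminishing_returns:
  assumes "A \<in> D" "B \<in> D" "A \<subseteq> B" "e \<notin> B" "insert e A \<in> D" "insert e B \<in> D"
  shows "\<rho> (insert e B) + \<rho> A \<le> \<rho> (insert e A) + \<rho> B"
proof -
  have "insert e A \<union> B = insert e B" "insert e A \<inter> B = A"
    using assms(3,4) by auto
  with rank_submodular[OF assms(5,2)] show ?thesis
    by simp
qed

lemma greedy_vector_nth_le_rank_increment:
  assumes es: "chain_enumeration E D es" and S: "S \<in> D" and k: "k < length es" and "es ! k \<in> S"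
  shows "greedy_vector \<rho> es (es ! k)
    \<le> real (\<rho> (S \<inter> set (take (Suc k) es))) - real (\<rho> (S \<inter> set (take k es)))"
proof -
  let ?P = "\<lambda>k. set (take k es)"
  have distinct: "distinct es" and prefix: "?P k \<in> D" "?P (Suc k) \<in> D"
    using es k unfolding chain_enumeration_def by auto
  have P_Suc: "?P (Suc k) = insert (es ! k) (?P k)"
    using set_take_Suc_nth[OF k] .
  with \<open>es ! k \<in> S\<close> have step: "S \<inter> ?P (Suc k) = insert (es ! k) (S \<inter> ?P k)"
    by auto
  have "\<rho> (?P (Suc k)) + \<rho> (S \<inter> ?P k) \<le> \<rho> (S \<inter> ?P (Suc k)) + \<rho> (?P k)"
    unfolding step unfolding P_Suc
  proof (rule rank_diminishing_returns)
    show "S \<inter> ?P k \<in> D" "?P k \<in> D" "S \<inter> ?P k \<subseteq> ?P k" "es ! k \<notin> ?P k"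
      using Int_in_lattice S prefix(1) nth_notin_set_take[OF distinct k] by auto
    show "insert (es ! k) (S \<inter> ?P k) \<in> D"
      using Int_in_lattice[OF S prefix(2)] unfolding step .
    show "insert (es ! k) (?P k) \<in> D"
      using prefix(2) unfolding P_Suc .
  qed
  then have "real (\<rho> (?P (Suc k))) + real (\<rho> (S \<inter> ?P k)) \<le> real (\<rho> (S \<inter> ?P (Suc k))) + real (\<rho> (?P k))"
    by (simp only: of_nat_add[symmetric] of_nat_le_iff)
  with greedy_vector_nth[where \<rho> = \<rho>, OF distinct k] show ?thesis
    by linarith
qed

lemma sum_greedy_vector_Int_prefix_le_rank:
  assumes es: "chain_enumeration E D es" and S: "S \<in> D" and "k \<le> length es"
  shows "sum (greedy_vector \<rho> es) (S \<inter> set (take k es)) \<le> real (\<rho> (S \<inter> set (take k es)))"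
  using assms(3)
proof (induction k)
  case 0
  then show ?case by (simp add: rank_empty)
next
  case (Suc k)
  let ?g = "greedy_vector \<rho> es" and ?P = "\<lambda>k. set (take k es)"
  have k: "k < length es" and distinct: "distinct es"
    using Suc.prems es unfolding chain_enumeration_def by auto
  show ?case
  proof (cases "es ! k \<in> S")
    case False
    then have "S \<inter> ?P (Suc k) = S \<inter> ?P k"
      using set_take_Suc_nth[OF k] by auto
    with Suc show ?thesis by simp
  next
    case True
    then have "S \<inter> ?P (Suc k) = insert (es ! k) (S \<inter> ?P k)"
      using set_take_Suc_nth[OF k] by auto
    then have "sum ?g (S \<inter> ?P (Suc k)) = ?g (es ! k) + sum ?g (S \<inter> ?P k)"
      using nth_notin_set_take[OF distinct k] by simp
    with greedy_vector_nth_le_rank_increment[OF es S k True] Suc show ?thesis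
      by simp
  qed
qed

lemma greedy_vector_in_polyhedron:
  assumes es: "chain_enumeration E D es"
  shows "greedy_vector \<rho> es \<in> polyhedron"
proof -
  have "distinct es" "set es = E"
    using es unfolding chain_enumeration_def by auto
  have "sum (greedy_vector \<rho> es) S \<le> real (\<rho> S)" if "S \<in> D" for S
    using sum_greedy_vector_Int_prefix_le_rank[OF es that order_refl]
      lattice_subset_ground[OF that] \<open>set es = E\<close> by (simp add: Int_absorb2)
  moreover have "sum (greedy_vector \<rho> es) E = real (\<rho> E)"
    using sum_greedy_vector_prefix[where \<rho> = \<rho>, OF \<open>distinct es\<close> rank_empty order_refl]
      \<open>set es = E\<close> by simp
  moreover have "greedy_vector \<rho> es e = 0" if "e \<notin> E" for e
    using that \<open>set es = E\<close> unfolding greedy_vector_def by simp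
  ultimately show ?thesis
    unfolding base_polyhedron_def by blast
qed

lemma greedy_vector_is_vertex:
  assumes es: "chain_enumeration E D es"
  shows "is_vertex (greedy_vector \<rho> es) polyhedron"
proof -
  let ?g = "greedy_vector \<rho> es" and ?P = "\<lambda>k. set (take k es)"
  have distinct: "distinct es" and "set es = E" and prefix: "\<And>k. k \<le> length es \<Longrightarrow> ?P k \<in> D"
    using es unfolding chain_enumeration_def by auto
  have "y = ?g \<and> z = ?g"
    if y: "y \<in> polyhedron" and z: "z \<in> polyhedron" and t: "0 < t" "t < 1"
      and g: "?g = (\<lambda>e. t * y e + (1 - t) * z e)" for y z t
  proof -
    have tight: "sum y (?P k) = real (\<rho> (?P k)) \<and> sum z (?P k) = real (\<rho> (?P k))"
      if k: "k \<le> length es" for k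
    proof (rule convex_combination_attains_bound[OF t])
      show "sum y (?P k) \<le> real (\<rho> (?P k))" "sum z (?P k) \<le> real (\<rho> (?P k))"
        using sum_le_rank y z prefix[OF k] by blast+
      have "t * sum y (?P k) + (1 - t) * sum z (?P k) = sum ?g (?P k)"
        unfolding g by (simp add: sum.distrib sum_distrib_left)
      also have "\<dots> = real (\<rho> (?P k))"
        using sum_greedy_vector_prefix[where \<rho> = \<rho>, OF distinct rank_empty k] .
      finally show "t * sum y (?P k) + (1 - t) * sum z (?P k) = real (\<rho> (?P k))" .
    qed
    have "\<And>e. e \<notin> set es \<Longrightarrow> y e = 0 \<and> z e = 0"
      using y z \<open>set es = E\<close> unfolding base_polyhedron_def by auto
    with distinct tight show ?thesis
      using eq_greedy_vector_if_tight_on_prefixes[of es y \<rho>]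
        eq_greedy_vector_if_tight_on_prefixes[of es z \<rho>] by blast
  qed
  then show ?thesis
    unfolding is_vertex_def using greedy_vector_in_polyhedron[OF es] by metis
qed

lemma card_Int_basis_le_rank:
  assumes A: "A \<in> D" and "B \<in> bases E D \<rho>"
  shows "card (A \<inter> B) \<le> \<rho> A"
proof -
  obtain x where B: "B = support E x" and vertex: "is_vertex x polyhedron"
    using assms(2) unfolding bases_def by blast
  have "real (card (A \<inter> B)) = sum x A"
    unfolding B using vertex A by (rule card_Int_vertex_support)
  also have "\<dots> \<le> real (\<rho> A)"
    using vertex A sum_le_rank unfolding is_vertex_def by blast
  finally show ?thesis by simp
qed

lemma exists_basis_card_Int_eq_rank:
  assumes A: "A \<in> D"
  shows "\<exists>B\<in>bases E D \<rho>. card (A \<inter> B) = \<rho> A"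
proof -
  obtain es where es: "chain_enumeration E D es" and prefix: "set (take (card A) es) = A"
    using exists_chain_enumeration_through[OF A] by blast
  let ?g = "greedy_vector \<rho> es"
  have vertex: "is_vertex ?g polyhedron"
    using greedy_vector_is_vertex[OF es] .
  have "card A \<le> length es"
    using es card_mono[OF finite_ground lattice_subset_ground[OF A]] distinct_card
    unfolding chain_enumeration_def by fastforce
  have "real (card (A \<inter> support E ?g)) = sum ?g A"
    using vertex A by (rule card_Int_vertex_support)
  also have "\<dots> = real (\<rho> A)"
    using sum_greedy_vector_prefix[where \<rho> = \<rho>, OF _ rank_empty \<open>card A \<le> length es\<close>] es prefix
    unfolding chain_enumeration_def by simp
  finally have "card (A \<inter> support E ?g) = \<rho> A"
    by simp
  moreover have "support E ?g \<in> bases E D \<rho>"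
    unfolding bases_def using vertex by blast
  ultimately show ?thesis by blast
qed

lemma finite_bases: "finite (bases E D \<rho>)"
proof -
  have "bases E D \<rho> \<subseteq> Pow E"
    unfolding bases_def support_def by auto
  with finite_ground show ?thesis
    by (simp add: finite_subset)
qed

end

theorem proposition3p6:
  fixes E :: "'a set" and D :: "'a set set" and \<rho> :: "'a set \<Rightarrow> nat"
  assumes "U_matroid E D \<rho>"
    and "A \<in> D"
  shows "\<rho> A = Max {card (A \<inter> B) | B. B \<in> bases E D \<rho>}"
proof -
  interpret u_matroid E D \<rho>
    using assms(1) by (rule u_matroidI)
  let ?C = "{card (A \<inter> B) | B. B \<in> bases E D \<rho>}"
  have "finite ?C"
    using finite_bases by simp
  moreover have "n \<le> \<rho> A" if "n \<in> ?C" for n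
    using that card_Int_basis_le_rank[OF assms(2)] by blast
  moreover have "\<rho> A \<in> ?C"
    using exists_basis_card_Int_eq_rank[OF assms(2)] by force
  ultimately show ?thesis
    by (rule Max_eqI[symmetric])
qed

end
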